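(* Let $q\ge5$ be a prime power and let $\mathcal{C}_\mathscr{C}$ be the $[q+1,q-3,5]_q$ code with parity check matrix whose columns are the vectors $(1,t,t^2,t^3)$, $t\in\mathbb{F}_q$, and $(0,0,0,1)$. All weight-$1$ cosets $\mathcal{V}^{(1)}$ of $\mathcal{C}_\mathscr{C}$ have the same weight distribution, namely $B_0(\mathcal{V}^{(1)})=B_2(\mathcal{V}^{(1)})=B_3(\mathcal{V}^{(1)})=0$, $B_1(\mathcal{V}^{(1)})=1$, $B_4(\mathcal{V}^{(1)})=\binom{q}{4}$, and for $w\ge5$ $$B_w(\mathcal{V}^{(1)})=A_w(\mathcal{C}_\mathscr{C})+(-1)^{w}\left(\binom{q+1}{w}\binom{w-1}{3}-\binom{q}{w-1}\binom{w-2}{2}\right).$$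
   Context: A coset of a linear code $\mathcal{C}\subseteq\mathbb{F}_q^n$ is a set $\mathbf{v}+\mathcal{C}$; its weight is the minimum Hamming weight of its vectors. $B_w(\mathcal{V})$ is the number of vectors of Hamming weight $w$ in the coset $\mathcal{V}$, and $A_w(\mathcal{C}_\mathscr{C})$ is the number of codewords of Hamming weight $w$ in $\mathcal{C}_\mathscr{C}$. *)

theory Defs
  imports Main
begin

text \<open>Coordinates of the code are indexed by 'a option: Some t corresponds to the
column (1,t,t^2,t^3), t in F_q, and None to the column (0,0,0,1).
Vectors of F_q^(q+1) are functions 'a option => 'a.\<close>

definition pcm_col :: "'a::{field,finite} option \<Rightarrow> nat \<Rightarrow> 'a" where
  "pcm_col j i = (case j of Some t \<Rightarrow> t ^ i | None \<Rightarrow> (if i = 3 then 1 else 0))"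

definition code_C :: "('a::{field,finite} option \<Rightarrow> 'a) set" where
  "code_C = {c. \<forall>i<4. (\<Sum>j\<in>UNIV. c j * pcm_col j i) = 0}"

definition hweight :: "('b \<Rightarrow> 'a::zero) \<Rightarrow> nat" where
  "hweight v = card {j. v j \<noteq> 0}"

definition coset :: "('b \<Rightarrow> 'a::plus) \<Rightarrow> ('b \<Rightarrow> 'a) set \<Rightarrow> ('b \<Rightarrow> 'a) set" where
  "coset v C = (\<lambda>c. (\<lambda>j. v j + c j)) ` C"

definition coset_weight :: "('b \<Rightarrow> 'a::zero) set \<Rightarrow> nat" where
  "coset_weight V = Min (hweight ` V)"

definition Bw :: "nat \<Rightarrow> ('b \<Rightarrow> 'a::zero) set \<Rightarrow> nat" where
  "Bw w V = card {u\<in>V. hweight u = w}"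

definition Aw :: "nat \<Rightarrow> ('b \<Rightarrow> 'a::zero) set \<Rightarrow> nat" where
  "Aw w C = card {c\<in>C. hweight c = w}"

end

(*
  Any 4 columns of the parity check matrix are linearly independent: a nonzero vector of
  weight at most 4 with zero syndrome is ruled out by pairing its syndrome with the
  coefficients of the polynomial vanishing on all but one of its finite support points.

  So consider any r-row parity check matrix with every r columns independent, and let
  N(S) be the number of vectors of a coset supported inside S. If |S| >= r the syndrome
  map on vectors supported in S is onto, so N(S) is the same for every coset; if |S| < r
  then N(S) <= 1, and for the coset of a e_j it is 1 exactly when j is in S. Moebius
  inversion over the subsets of S turns N into the number of vectors with support exactly
  S, and the difference between the coset and the code becomes
  (-1)^(|S|+r) * binom(|S - {j}| - 1, r - 1). Summing over the w-subsets S gives B_w - A_w.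
*)
theory Submission
  imports Defs "HOL-Computational_Algebra.Polynomial" "HOL-Library.FuncSet" "HOL-Library.Cardinality"
begin

definition supp :: "('b \<Rightarrow> 'a::zero) \<Rightarrow> 'b set" where
  "supp u = {j. u j \<noteq> 0}"

definition syndrome :: "('j \<Rightarrow> nat \<Rightarrow> 'a) \<Rightarrow> ('j \<Rightarrow> 'a) \<Rightarrow> nat \<Rightarrow> 'a::semiring_0" where
  "syndrome H u i = (\<Sum>j\<in>UNIV. u j * H j i)"

lemma hweight_eq_card_supp: "hweight u = card (supp u)"
  by (simp add: hweight_def supp_def)

lemma supp_zero [simp]: "supp (\<lambda>_. 0) = {}"
  by (simp add: supp_def)

lemma syndrome_zero [simp]: "syndrome H (\<lambda>_. 0) i = 0"
  by (simp add: syndrome_def)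

lemma syndrome_add: "syndrome H (\<lambda>j. u j + v j) i = syndrome H u i + syndrome H v i"
  by (simp add: syndrome_def sum.distrib distrib_right)

lemma syndrome_diff:
  "syndrome H (\<lambda>j. u j - v j) i = syndrome H u i - (syndrome H v i :: 'a::ring)"
  by (simp add: syndrome_def sum_subtractf left_diff_distrib)

lemma supp_add_subset: "supp (\<lambda>j. u j + v j) \<subseteq> supp u \<union> supp (v :: 'b \<Rightarrow> 'a::monoid_add)"
  by (auto simp: supp_def)

lemma supp_diff_subset: "supp (\<lambda>j. u j - v j) \<subseteq> supp u \<union> supp (v :: 'b \<Rightarrow> 'a::group_add)"
  by (auto simp: supp_def)

lemma card_funs_with_supp_subset:
  assumes "finite B"
  shows "card {u :: 'b \<Rightarrow> 'a::zero. supp u \<subseteq> B} = CARD('a) ^ card B"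
proof -
  define zero_ext :: "('b \<Rightarrow> 'a) \<Rightarrow> 'b \<Rightarrow> 'a" where "zero_ext = (\<lambda>f j. if j \<in> B then f j else 0)"
  have "{u. supp u \<subseteq> B} = zero_ext ` (\<Pi>\<^sub>E j\<in>B. UNIV)"
  proof (intro equalityI subsetI)
    fix u :: "'b \<Rightarrow> 'a" assume "u \<in> {u. supp u \<subseteq> B}"
    then have "zero_ext (restrict u B) = u"
      by (auto simp: zero_ext_def supp_def fun_eq_iff)
    then show "u \<in> zero_ext ` (\<Pi>\<^sub>E j\<in>B. UNIV)"
      using image_eqI [of u zero_ext "restrict u B"] by simp
  next
    fix u assume "u \<in> zero_ext ` (\<Pi>\<^sub>E j\<in>B. UNIV)"
    then show "u \<in> {u. supp u \<subseteq> B}" by (auto simp: zero_ext_def supp_def)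
  qed
  moreover have "inj_on zero_ext (\<Pi>\<^sub>E j\<in>B. UNIV)"
  proof (rule inj_onI, rule PiE_ext)
    fix f g j assume "zero_ext f = zero_ext g" "j \<in> B"
    then have "zero_ext f j = zero_ext g j" by simp
    with \<open>j \<in> B\<close> show "f j = g j" by (simp add: zero_ext_def)
  qed
  ultimately show ?thesis
    using assms by (simp add: card_image card_PiE)
qed

lemma sum_subsets_card_less:
  fixes h :: "nat \<Rightarrow> 'a::comm_semiring_1"
  assumes "finite A"
  shows "(\<Sum>T | T \<subseteq> A \<and> card T < n. h (card T)) = (\<Sum>k<n. h k * of_nat (card A choose k))"
proof -
  have "(\<Sum>T | T \<subseteq> A \<and> card T < n. h (card T))
      = (\<Sum>k<n. \<Sum>T \<in> {T \<in> {T. T \<subseteq> A \<and> card T < n}. card T = k}. h (card T))"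
  proof (intro sum.group [symmetric])
    show "finite {T. T \<subseteq> A \<and> card T < n}"
      by (rule finite_subset [of _ "Pow A"]) (use assms in auto)
  qed auto
  also have "\<dots> = (\<Sum>k<n. h k * of_nat (card A choose k))"
  proof (rule sum.cong [OF refl])
    fix k assume "k \<in> {..<n}"
    then have "{T \<in> {T. T \<subseteq> A \<and> card T < n}. card T = k} = {T. T \<subseteq> A \<and> card T = k}"
      by auto
    then show "(\<Sum>T \<in> {T \<in> {T. T \<subseteq> A \<and> card T < n}. card T = k}. h (card T))
        = h k * of_nat (card A choose k)"
      using n_subsets [OF assms] by (simp add: mult.commute)
  qed
  finally show ?thesis .
qed

lemma alternating_sum_choose_atMost:
  "(\<Sum>k\<le>n. (-1) ^ k * of_nat (Suc m choose k)) = ((-1) ^ n * of_nat (m choose n) :: 'a::comm_ring_1)"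
  by (induction n) (simp_all add: algebra_simps)

lemma sum_subsets_card_less_alternating:
  assumes "finite A" and "0 < card A" and "0 < n"
  shows "(\<Sum>T | T \<subseteq> A \<and> card T < n. (-1) ^ card T)
    = ((-1) ^ (n - 1) * of_nat ((card A - 1) choose (n - 1)) :: 'a::comm_ring_1)"
proof -
  obtain m k where m: "card A = Suc m" and k: "n = Suc k"
    using assms(2,3) by (metis gr0_implies_Suc)
  have "(\<Sum>T | T \<subseteq> A \<and> card T < n. (-1) ^ card T) = (\<Sum>i<n. (-1) ^ i * (of_nat (card A choose i) :: 'a))"
    by (rule sum_subsets_card_less [OF assms(1)])
  also have "\<dots> = (-1) ^ k * of_nat (m choose k)"
    unfolding m k lessThan_Suc_atMost by (rule alternating_sum_choose_atMost)
  finally show ?thesis by (simp add: m k)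
qed

lemma card_subsets_avoiding:
  assumes "finite A" "a \<in> A"
  shows "card {S. S \<subseteq> A \<and> card S = k \<and> a \<notin> S} = (card A - 1) choose k"
proof -
  have "{S. S \<subseteq> A \<and> card S = k \<and> a \<notin> S} = {S. S \<subseteq> A - {a} \<and> card S = k}" by auto
  then show ?thesis using assms by (simp add: n_subsets)
qed

lemma card_subsets_containing:
  assumes "finite A" "a \<in> A" "0 < k"
  shows "card {S. S \<subseteq> A \<and> card S = k \<and> a \<in> S} = (card A - 1) choose (k - 1)"
proof -
  let ?avoid = "{S. S \<subseteq> A \<and> card S = k \<and> a \<notin> S}"
  let ?contain = "{S. S \<subseteq> A \<and> card S = k \<and> a \<in> S}"
  have "?avoid \<union> ?contain = {S. S \<subseteq> A \<and> card S = k}" by blast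
  then have "card A choose k = card (?avoid \<union> ?contain)"
    using n_subsets [OF assms(1), of k] by simp
  also have "\<dots> = card ?avoid + card ?contain"
    using assms(1) by (intro card_Un_disjoint) auto
  also have "\<dots> = ((card A - 1) choose k) + card ?contain"
    using assms by (simp add: card_subsets_avoiding)
  finally have "card A choose k = ((card A - 1) choose k) + card ?contain" .
  moreover have "card A choose k = ((card A - 1) choose (k - 1)) + ((card A - 1) choose k)"
    using assms by (intro choose_reduce_nat) (auto simp: card_gt_0_iff)
  ultimately show ?thesis by simp
qed

locale mds_parity_check =
  fixes H :: "'j::finite \<Rightarrow> nat \<Rightarrow> 'a::{field,finite}" and r :: nat
  assumes eq_0_if_syndrome_eq_0:
    "card (supp u) \<le> r \<Longrightarrow> \<forall>i<r. syndrome H u i = 0 \<Longrightarrow> u = (\<lambda>_. 0)"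
begin

abbreviation same_syndrome :: "('j \<Rightarrow> 'a) \<Rightarrow> ('j \<Rightarrow> 'a) \<Rightarrow> bool" where
  "same_syndrome u x \<equiv> \<forall>i<r. syndrome H u i = syndrome H x i"

definition kernel :: "('j \<Rightarrow> 'a) set" where
  "kernel = {u. \<forall>i<r. syndrome H u i = 0}"

definition coset_within :: "'j set \<Rightarrow> ('j \<Rightarrow> 'a) \<Rightarrow> ('j \<Rightarrow> 'a) set" where
  "coset_within S x = {u. supp u \<subseteq> S \<and> same_syndrome u x}"

definition coset_with_supp :: "'j set \<Rightarrow> ('j \<Rightarrow> 'a) \<Rightarrow> ('j \<Rightarrow> 'a) set" where
  "coset_with_supp S x = {u. supp u = S \<and> same_syndrome u x}"

lemma coset_kernel: "coset x kernel = {u. same_syndrome u x}"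
proof (intro equalityI subsetI)
  fix u assume "u \<in> coset x kernel"
  then obtain c where "c \<in> kernel" "u = (\<lambda>j. x j + c j)"
    by (auto simp: coset_def)
  then show "u \<in> {u. same_syndrome u x}"
    by (simp add: kernel_def syndrome_add)
next
  fix u assume "u \<in> {u. same_syndrome u x}"
  then have "(\<lambda>j. u j - x j) \<in> kernel"
    by (simp add: kernel_def syndrome_diff)
  then show "u \<in> coset x kernel"
    using image_eqI [of u "\<lambda>c j. x j + c j" "\<lambda>j. u j - x j"] by (simp add: coset_def)
qed

lemma eq_if_same_syndrome:
  assumes "card (supp u \<union> supp v) \<le> r" and "same_syndrome u v"
  shows "u = v"
proof -
  have "card (supp (\<lambda>j. u j - v j)) \<le> r"
    using order_trans [OF card_mono [OF finite supp_diff_subset] assms(1)] .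
  then have "(\<lambda>j. u j - v j) = (\<lambda>_. 0)"
    using assms(2) by (intro eq_0_if_syndrome_eq_0) (simp_all add: syndrome_diff)
  then have "u j = v j" for j
    using fun_cong [of "\<lambda>j. u j - v j" "\<lambda>_. 0" j] by simp
  then show ?thesis by (rule ext)
qed

lemma exists_same_syndrome_within:
  assumes "card B = r"
  shows "\<exists>u. supp u \<subseteq> B \<and> same_syndrome u x"
proof -
  let ?U = "{u :: 'j \<Rightarrow> 'a. supp u \<subseteq> B}"
  let ?P = "\<Pi>\<^sub>E i\<in>{..<r}. (UNIV :: 'a set)"
  let ?synd = "\<lambda>u. restrict (syndrome H u) {..<r}"
  have same_if_synd_eq: "same_syndrome u v" if "?synd u = ?synd v" for u v
  proof (intro allI impI)
    fix i assume "i < r"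
    then show "syndrome H u i = syndrome H v i"
      using fun_cong [OF that, of i] by simp
  qed
  have "inj_on ?synd ?U"
  proof (rule inj_onI)
    fix u v assume "u \<in> ?U" "v \<in> ?U" "?synd u = ?synd v"
    moreover have "card (supp u \<union> supp v) \<le> r"
      using calculation assms card_mono [of B "supp u \<union> supp v"] by simp
    ultimately show "u = v"
      using eq_if_same_syndrome same_if_synd_eq by blast
  qed
  then have "card (?synd ` ?U) = card ?P"
    using assms by (simp add: card_image card_funs_with_supp_subset card_PiE)
  moreover have "?synd ` ?U \<subseteq> ?P"
    by (simp add: image_subset_iff)
  ultimately have "?synd ` ?U = ?P"
    by (intro card_subset_eq finite_PiE) simp_all
  moreover have "?synd x \<in> ?P" by simp
  ultimately have "?synd x \<in> ?synd ` ?U" by simp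
  then obtain u where "?synd x = ?synd u" "u \<in> ?U"
    by (rule imageE)
  then show ?thesis using same_if_synd_eq [of u x] by auto
qed

lemma card_coset_within_large:
  assumes "r \<le> card S"
  shows "card (coset_within S x) = card (coset_within S (\<lambda>_. 0))"
proof -
  obtain B where "B \<subseteq> S" "card B = r"
    using obtain_subset_with_card_n [OF assms] by metis
  then obtain y where y: "supp y \<subseteq> S" "same_syndrome y x"
    using exists_same_syndrome_within by blast
  let ?shift = "\<lambda>u j. u j + y j"
  have "coset_within S x = ?shift ` coset_within S (\<lambda>_. 0)"
  proof (intro equalityI subsetI)
    fix u assume "u \<in> coset_within S x"
    then have "(\<lambda>j. u j - y j) \<in> coset_within S (\<lambda>_. 0)"
      using y supp_diff_subset [of u y] by (auto simp: coset_within_def syndrome_diff)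
    then show "u \<in> ?shift ` coset_within S (\<lambda>_. 0)"
      using image_eqI [of u ?shift "\<lambda>j. u j - y j"] by simp
  next
    fix u assume "u \<in> ?shift ` coset_within S (\<lambda>_. 0)"
    then obtain c where c: "c \<in> coset_within S (\<lambda>_. 0)" and u: "u = ?shift c" by blast
    have "supp u \<subseteq> S"
      using c y supp_add_subset [of c y] by (auto simp: u coset_within_def)
    then show "u \<in> coset_within S x"
      using c y by (simp add: u coset_within_def syndrome_add)
  qed
  moreover have "inj_on ?shift (coset_within S (\<lambda>_. 0))"
    by (rule inj_onI) (simp add: fun_eq_iff)
  ultimately show ?thesis by (simp add: card_image)
qed

lemma coset_within_small:
  assumes "card (S \<union> supp x) \<le> r"
  shows "coset_within S x = (if supp x \<subseteq> S then {x} else {})"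
proof -
  have unique: "u = x" if "u \<in> coset_within S x" for u
  proof (rule eq_if_same_syndrome)
    have "supp u \<union> supp x \<subseteq> S \<union> supp x"
      using that by (auto simp: coset_within_def)
    from card_mono [OF finite this] show "card (supp u \<union> supp x) \<le> r"
      using assms by linarith
    show "same_syndrome u x"
      using that by (simp add: coset_within_def)
  qed
  show ?thesis
  proof (cases "supp x \<subseteq> S")
    case True
    then have "x \<in> coset_within S x" by (simp add: coset_within_def)
    with unique have "coset_within S x = {x}" by blast
    with True show ?thesis by simp
  next
    case False
    then have "x \<notin> coset_within S x" by (simp add: coset_within_def)
    with unique have "coset_within S x = {}" by blast
    with False show ?thesis by simp
  qed
qed

lemma card_coset_within_eq_sum:
  "card (coset_within S x) = (\<Sum>T\<in>Pow S. card (coset_with_supp T x))"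
proof -
  have "coset_within S x = (\<Union>T\<in>Pow S. coset_with_supp T x)"
    by (auto simp: coset_within_def coset_with_supp_def)
  then show ?thesis
    by (simp only:) (rule card_UN_disjoint, auto simp: coset_with_supp_def)
qed

lemma Bw_coset_kernel_eq_sum:
  "Bw w (coset x kernel) = (\<Sum>S | card S = w. card (coset_with_supp S x))"
proof -
  have "{u \<in> coset x kernel. hweight u = w} = (\<Union>S\<in>{S. card S = w}. coset_with_supp S x)"
    by (auto simp: coset_kernel coset_with_supp_def hweight_eq_card_supp)
  then show ?thesis
    unfolding Bw_def by (simp only:) (rule card_UN_disjoint, auto simp: coset_with_supp_def)
qed

lemma Aw_kernel_eq_Bw: "Aw w kernel = Bw w (coset (\<lambda>_. 0) kernel)"
  unfolding Aw_def Bw_def coset_kernel by (simp add: kernel_def)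

lemma card_coset_within_diff:
  assumes "supp e = {j0}"
  shows "int (card (coset_within T e)) - int (card (coset_within T (\<lambda>_. 0)))
       = (if j0 \<notin> T \<and> card T < r then -1 else 0)"
proof (cases "card T < r")
  case True
  have "card (T \<union> supp e) \<le> r"
    using card_Un_le [of T "supp e"] True assms by simp
  then show ?thesis
    using True assms by (simp add: coset_within_small)
next
  case False
  then show ?thesis
    using card_coset_within_large [of T e] by simp
qed

lemma card_coset_with_supp_diff:
  assumes "2 \<le> r" and "r \<le> card S" and e: "supp e = {j0}"
  shows "int (card (coset_with_supp S e)) - int (card (coset_with_supp S (\<lambda>_. 0)))
       = (-1) ^ (card S + r) * int ((card (S - {j0}) - 1) choose (r - 1))"
proof -
  define diff_on where
    "diff_on T = int (card (coset_with_supp T e)) - int (card (coset_with_supp T (\<lambda>_. 0)))" for T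
  have "card (S - {j0}) > 0"
    using assms(1,2) by (cases "j0 \<in> S") (simp_all add: card_Diff_singleton_if)
  have "(-1) ^ card S * diff_on S
      = (\<Sum>T\<in>Pow S. (-1) ^ card T
          * (int (card (coset_within T e)) - int (card (coset_within T (\<lambda>_. 0)))))"
    by (rule inclusion_exclusion_symmetric [where f = "\<lambda>U. (-1) ^ card U * diff_on U"])
      (simp_all add: diff_on_def card_coset_within_eq_sum sum_subtractf)
  also have "\<dots> = (\<Sum>T\<in>Pow S. if j0 \<notin> T \<and> card T < r then - ((-1) ^ card T) else 0)"
    by (rule sum.cong) (simp_all add: card_coset_within_diff [OF e])
  also have "\<dots> = (\<Sum>T \<in> {T \<in> Pow S. j0 \<notin> T \<and> card T < r}. - ((-1) ^ card T))"
    by (rule sum.inter_filter [symmetric]) simp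
  also have "{T \<in> Pow S. j0 \<notin> T \<and> card T < r} = {T. T \<subseteq> S - {j0} \<and> card T < r}"
    by auto
  also have "(\<Sum>T | T \<subseteq> S - {j0} \<and> card T < r. - ((-1) ^ card T))
      = - ((-1) ^ (r - 1) * int ((card (S - {j0}) - 1) choose (r - 1)))"
    using sum_subsets_card_less_alternating [of "S - {j0}" r] \<open>card (S - {j0}) > 0\<close> assms(1)
    by (simp add: sum_negf)
  also have "\<dots> = (-1) ^ r * int ((card (S - {j0}) - 1) choose (r - 1))"
    using assms(1) by (simp add: power_eq_if)
  finally have "(-1) ^ card S * ((-1) ^ card S * diff_on S)
      = (-1) ^ card S * ((-1) ^ r * int ((card (S - {j0}) - 1) choose (r - 1)))"
    by simp
  then show ?thesis by (simp add: diff_on_def power_add)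
qed

lemma Aw_kernel_eq_0:
  assumes "0 < w" and "w \<le> r"
  shows "Aw w kernel = 0"
proof -
  have "u \<notin> kernel" if "hweight u = w" for u
  proof
    assume "u \<in> kernel"
    then have "u = (\<lambda>_. 0)"
      using that assms by (intro eq_0_if_syndrome_eq_0) (simp_all add: kernel_def hweight_eq_card_supp)
    with that assms show False by (simp add: hweight_eq_card_supp)
  qed
  then show ?thesis by (auto simp: Aw_def)
qed

lemma Bw_weight_1_coset_small:
  assumes "hweight e = 1" and "w < r"
  shows "Bw w (coset e kernel) = (if w = 1 then 1 else 0)"
proof -
  have unique: "u = e" if "same_syndrome u e" and "hweight u = w" for u
  proof (rule eq_if_same_syndrome)
    show "card (supp u \<union> supp e) \<le> r"
      using card_Un_le [of "supp u" "supp e"] that assms by (simp add: hweight_eq_card_supp)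
  qed (rule that(1))
  have "{u \<in> coset e kernel. hweight u = w} = (if w = 1 then {e} else {})"
    using unique assms(1) by (auto simp: coset_kernel)
  then show ?thesis by (simp add: Bw_def)
qed

theorem Bw_weight_1_coset:
  assumes "2 \<le> r" and "r \<le> w" and "hweight e = 1"
  shows "int (Bw w (coset e kernel)) = int (Aw w kernel)
    + (-1) ^ (w + r) * (int (CARD('j) choose w) * int ((w - 1) choose (r - 1))
                       - int ((CARD('j) - 1) choose (w - 1)) * int ((w - 2) choose (r - 2)))"
proof -
  obtain j0 where j0: "supp e = {j0}"
    using assms(3) by (auto simp: hweight_eq_card_supp card_1_singleton_iff)
  define n1 where "n1 = (CARD('j) - 1) choose (w - 1)"
  define n0 where "n0 = (CARD('j) - 1) choose w"
  have n1: "card ({S :: 'j set. card S = w} \<inter> {S. j0 \<in> S}) = n1"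
    using card_subsets_containing [of UNIV j0 w] assms(1,2) by (simp add: n1_def Collect_conj_eq [symmetric])
  have n0: "card ({S :: 'j set. card S = w} \<inter> - {S. j0 \<in> S}) = n0"
    using card_subsets_avoiding [of UNIV j0 w] by (simp add: n0_def Collect_conj_eq [symmetric] Collect_neg_eq [symmetric])
  have "int (Bw w (coset e kernel)) - int (Aw w kernel)
      = (\<Sum>S | card S = w. int (card (coset_with_supp S e)) - int (card (coset_with_supp S (\<lambda>_. 0))))"
    by (simp add: Aw_kernel_eq_Bw Bw_coset_kernel_eq_sum sum_subtractf)
  also have "\<dots> = (\<Sum>S | card S = w. (-1) ^ (w + r)
      * (if j0 \<in> S then int ((w - 2) choose (r - 1)) else int ((w - 1) choose (r - 1))))"
  proof (rule sum.cong [OF refl])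
    fix S :: "'j set" assume "S \<in> {S. card S = w}"
    then show "int (card (coset_with_supp S e)) - int (card (coset_with_supp S (\<lambda>_. 0)))
        = (-1) ^ (w + r) * (if j0 \<in> S then int ((w - 2) choose (r - 1)) else int ((w - 1) choose (r - 1)))"
      using card_coset_with_supp_diff [OF assms(1) _ j0, of S] assms(2)
      by (simp add: card_Diff_singleton_if numeral_2_eq_2)
  qed
  also have "\<dots> = (-1) ^ (w + r) * (int n1 * int ((w - 2) choose (r - 1)) + int n0 * int ((w - 1) choose (r - 1)))"
    by (simp add: sum_distrib_left [symmetric] sum.If_cases n0 n1)
  also have "int n1 * int ((w - 2) choose (r - 1)) + int n0 * int ((w - 1) choose (r - 1))
      = int (CARD('j) choose w) * int ((w - 1) choose (r - 1)) - int n1 * int ((w - 2) choose (r - 2))"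
  proof -
    have "CARD('j) choose w = n1 + n0"
      using choose_reduce_nat [of "CARD('j)" w] assms(1,2) by (simp add: n0_def n1_def)
    moreover have "(w - 1) choose (r - 1) = ((w - 2) choose (r - 2)) + ((w - 2) choose (r - 1))"
      using choose_reduce_nat [of "w - 1" "r - 1"] assms(1,2) by (simp add: numeral_2_eq_2)
    ultimately show ?thesis by (simp add: algebra_simps)
  qed
  finally show ?thesis by (simp add: n1_def)
qed

lemma obtain_weight_1_representative:
  assumes "coset_weight (coset v kernel) = 1"
  obtains e where "hweight e = 1" and "coset v kernel = coset e kernel"
proof -
  have "v \<in> coset v kernel"
    by (simp add: coset_kernel)
  then have "coset_weight (coset v kernel) \<in> hweight ` coset v kernel"
    unfolding coset_weight_def by (intro Min_in) auto
  then obtain e where "e \<in> coset v kernel" and "hweight e = 1"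
    using assms by auto
  moreover from \<open>e \<in> coset v kernel\<close> have "coset v kernel = coset e kernel"
    by (auto simp: coset_kernel)
  ultimately show ?thesis using that by blast
qed

end

lemma syndrome_pcm_col:
  "syndrome pcm_col u i = (\<Sum>t\<in>UNIV. u (Some t) * t ^ i) + (if i = 3 then u None else 0)"
proof -
  have "syndrome pcm_col u i = u None * pcm_col None i + (\<Sum>j\<in>range Some. u j * pcm_col j i)"
    unfolding syndrome_def UNIV_option_conv by (subst sum.insert) auto
  also have "(\<Sum>j\<in>range Some. u j * pcm_col j i) = (\<Sum>t\<in>UNIV. u (Some t) * t ^ i)"
    by (subst sum.reindex) (auto simp: pcm_col_def)
  also have "u None * pcm_col None i = (if i = 3 then u None else 0)"
    by (simp add: pcm_col_def)
  finally show ?thesis by (simp only: add.commute)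
qed

lemma sum_coeff_syndrome_pcm_col:
  fixes p :: "'a::{field,finite} poly"
  assumes "degree p \<le> 3"
  shows "(\<Sum>i<4. coeff p i * syndrome pcm_col u i)
    = (\<Sum>t\<in>UNIV. u (Some t) * poly p t) + coeff p 3 * u None"
proof -
  have poly_p: "poly p t = (\<Sum>i<4. coeff p i * t ^ i)" for t
    unfolding poly_altdef
    by (rule sum.mono_neutral_left) (use assms in \<open>auto simp: coeff_eq_0\<close>)
  have "(\<Sum>i<4. coeff p i * syndrome pcm_col u i)
      = (\<Sum>i<4. coeff p i * (\<Sum>t\<in>UNIV. u (Some t) * t ^ i)) + coeff p 3 * u None"
    by (simp add: syndrome_pcm_col distrib_left sum.distrib eval_nat_numeral)
  also have "(\<Sum>i<4. coeff p i * (\<Sum>t\<in>UNIV. u (Some t) * t ^ i)) = (\<Sum>t\<in>UNIV. u (Some t) * poly p t)"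
    by (simp add: poly_p sum_distrib_left sum.swap [of _ "{..<4}"] mult_ac)
  finally show ?thesis .
qed

lemma card_supp_option:
  fixes u :: "'b::finite option \<Rightarrow> 'a::zero"
  shows "card (supp u) = card (supp (\<lambda>t. u (Some t))) + (if u None = 0 then 0 else 1)"
proof -
  have supp_u: "supp u = Some ` supp (\<lambda>t. u (Some t)) \<union> (if u None = 0 then {} else {None})"
  proof (rule set_eqI)
    fix j show "j \<in> supp u \<longleftrightarrow> j \<in> Some ` supp (\<lambda>t. u (Some t)) \<union> (if u None = 0 then {} else {None})"
      by (cases j) (auto simp: supp_def)
  qed
  have "card (Some ` supp (\<lambda>t. u (Some t))) = card (supp (\<lambda>t. u (Some t)))"
    by (rule card_image) (simp add: inj_on_def)
  then show ?thesis
    unfolding supp_u by (cases "u None = 0") auto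
qed

lemma syndrome_pcm_col_eq_0_imp_Some_eq_0:
  fixes u :: "'a::{field,finite} option \<Rightarrow> 'a"
  assumes "card (supp u) \<le> 4" and "\<forall>i<4. syndrome pcm_col u i = 0"
  shows "u (Some t0) = 0"
proof (rule ccontr)
  assume nz: "u (Some t0) \<noteq> 0"
  define Q where "Q = supp (\<lambda>t. u (Some t)) - {t0}"
  define p :: "'a poly" where "p = (\<Prod>t\<in>Q. [:- t, 1:])"
  have poly_p: "poly p x = (\<Prod>t\<in>Q. x - t)" for x
    by (simp add: p_def poly_prod)
  have "t0 \<in> supp (\<lambda>t. u (Some t))"
    using nz by (simp add: supp_def)
  then have "card (supp (\<lambda>t. u (Some t))) = Suc (card Q)"
    unfolding Q_def by (rule card_Suc_Diff1 [OF finite, symmetric])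
  then have deg: "degree p + (if u None = 0 then 0 else 1) \<le> 3"
    using assms(1) card_supp_option [of u] by (simp add: p_def degree_prod_eq_sum_degree)
  have "coeff p 3 * u None = 0"
    using deg by (cases "u None = 0") (simp_all add: coeff_eq_0)
  then have "0 = (\<Sum>t\<in>UNIV. u (Some t) * poly p t)"
    using assms(2) sum_coeff_syndrome_pcm_col [of p u] deg by (simp split: if_splits)
  also have "\<dots> = u (Some t0) * poly p t0 + (\<Sum>t\<in>UNIV - {t0}. u (Some t) * poly p t)"
    by (rule sum.remove) simp_all
  also have "(\<Sum>t\<in>UNIV - {t0}. u (Some t) * poly p t) = 0"
  proof (rule sum.neutral, rule ballI)
    fix t assume "t \<in> UNIV - {t0}"
    then show "u (Some t) * poly p t = 0"
      by (cases "t \<in> Q") (auto simp: Q_def supp_def poly_p)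
  qed
  finally have "u (Some t0) * poly p t0 = 0" by simp
  moreover have "poly p t0 \<noteq> 0"
    by (simp add: poly_p Q_def)
  ultimately show False using nz by simp
qed

lemma mds_parity_check_pcm_col: "mds_parity_check (pcm_col :: 'a::{field,finite} option \<Rightarrow> nat \<Rightarrow> 'a) 4"
proof
  fix u :: "'a option \<Rightarrow> 'a"
  assume "card (supp u) \<le> 4" and synd: "\<forall>i<4. syndrome pcm_col u i = 0"
  then have Some_eq_0: "u (Some t) = 0" for t
    by (rule syndrome_pcm_col_eq_0_imp_Some_eq_0)
  have "u None = syndrome pcm_col u 3"
    by (simp add: syndrome_pcm_col Some_eq_0)
  with synd have "u None = 0" by simp
  show "u = (\<lambda>_. 0)"
  proof
    fix j show "u j = 0"
      by (cases j) (simp_all add: \<open>u None = 0\<close> Some_eq_0)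
  qed
qed

theorem theorem4p2:
  fixes v :: "'a::{field,finite} option \<Rightarrow> 'a"
  assumes q5: "card (UNIV :: 'a set) \<ge> 5"
    and w1: "coset_weight (coset v (code_C :: ('a option \<Rightarrow> 'a) set)) = 1"
  shows "Bw 0 (coset v code_C) = 0 \<and> Bw 2 (coset v code_C) = 0 \<and> Bw 3 (coset v code_C) = 0
    \<and> Bw 1 (coset v code_C) = 1
    \<and> Bw 4 (coset v code_C) = card (UNIV :: 'a set) choose 4
    \<and> (\<forall>w\<ge>5. int (Bw w (coset v code_C)) =
          int (Aw w (code_C :: ('a option \<Rightarrow> 'a) set))
          + (-1) ^ w * (int ((card (UNIV :: 'a set) + 1) choose w) * int ((w - 1) choose 3)
                        - int (card (UNIV :: 'a set) choose (w - 1)) * int ((w - 2) choose 2)))"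
proof -
  interpret mds_parity_check "pcm_col :: 'a option \<Rightarrow> nat \<Rightarrow> 'a" 4
    by (rule mds_parity_check_pcm_col)
  have code_C: "code_C = kernel"
    by (simp add: code_C_def kernel_def syndrome_def)
  obtain e where e: "hweight e = 1" and V: "coset v kernel = coset e kernel"
    using w1 unfolding code_C by (rule obtain_weight_1_representative)
  let ?q = "card (UNIV :: 'a set)"
  have n: "CARD('a option) = ?q + 1"
    by (simp add: card_UNIV_option)
  have small: "Bw w (coset v kernel) = (if w = 1 then 1 else 0)" if "w < 4" for w
    using Bw_weight_1_coset_small [OF e that] by (simp add: V)
  have large: "int (Bw w (coset v kernel)) = int (Aw w kernel)
      + (-1) ^ w * (int ((?q + 1) choose w) * int ((w - 1) choose 3)
                   - int (?q choose (w - 1)) * int ((w - 2) choose 2))" if "4 \<le> w" for w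
    using Bw_weight_1_coset [of w e] that e by (simp add: V n power_add)
  have "int (Bw 4 (coset v kernel)) = int (Suc ?q choose 4) - int (?q choose 3)"
    using large [of 4] Aw_kernel_eq_0 [of 4] by simp
  also have "Suc ?q choose 4 = (?q choose 3) + (?q choose 4)"
    by (simp add: numeral_eq_Suc)
  finally have "Bw 4 (coset v kernel) = ?q choose 4" by simp
  then show ?thesis
    unfolding code_C using small large by simp
qed

end
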